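(* Let $a,\alpha,\beta,\gamma,\delta,\varepsilon,q\in\mathbb{C}$ with $a\neq 0,1$, $1+\alpha+\beta=\gamma+\delta+\varepsilon$, $\alpha\beta\neq0$ and $\gamma+\varepsilon\notin\{0,-1,-2,\dots\}$. Let $N\ge0$ be an integer with $\varepsilon+\gamma-\alpha=-N$ (respectively $\varepsilon+\gamma-\beta=-N$). Define $$R_n=(1-a)\,n\,(\varepsilon+\gamma+n-1),\qquad Q_n=-R_n+a(1+n-\delta)(n+\varepsilon)+(a\alpha\beta-q),$$ $$P_n=-\frac{a}{n+\varepsilon+\gamma}\,(n+\varepsilon)(n+\varepsilon+\gamma-\alpha)(n+\varepsilon+\gamma-\beta),$$ suppose $q$ is such that the $(N+1)\times(N+1)$ tridiagonal matrix with diagonal $Q_0,\dots,Q_N$, superdiagonal $R_1,\dots,R_N$ and subdiagonal $P_0,\dots,P_{N-1}$ is singular, and let $(a_0,\dots,a_N)$ with $a_0=1$ be a vector in its kernel. Then the function $$u(z)=\sum_{n=0}^{N}a_n\,{}_2F_1(\alpha,\beta;\gamma+\varepsilon+n;z)$$ (a solution of the general Heun equation $u''+\big(\frac{\gamma}{z}+\frac{\delta}{z-1}+\frac{\varepsilon}{z-a}\big)u'+\frac{\alpha\beta z-q}{z(z-1)(z-a)}u=0$) is of the form $u(z)=(1-z)^{1-\delta}p(z)$ with $p$ a polynomial in $z$.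
   Context: ${}_2F_1(\alpha,\beta;c;z)$ denotes the Gauss hypergeometric function on $\mathbb{C}\setminus[1,\infty)$, and $(1-z)^{1-\delta}$ is taken with its principal branch there. *)

theory Defs
  imports "HOL-Analysis.Analysis" "HOL-Computational_Algebra.Polynomial"
begin

definition slit_plane :: "complex set" where
  "slit_plane = - {complex_of_real x | x. x \<ge> 1}"

definition hyp2F1_series :: "complex \<Rightarrow> complex \<Rightarrow> complex \<Rightarrow> complex \<Rightarrow> complex" where
  "hyp2F1_series al be c z =
     (\<Sum>n. pochhammer al n * pochhammer be n / (pochhammer c n * fact n) * z ^ n)"

text \<open>The Gauss hypergeometric function on the slit plane: the (unique, by the
  identity theorem) holomorphic function on the slit plane agreeing with the series
  on the unit disc.\<close>
definition hyp2F1 :: "complex \<Rightarrow> complex \<Rightarrow> complex \<Rightarrow> complex \<Rightarrow> complex" where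
  "hyp2F1 al be c = (SOME f. f holomorphic_on slit_plane \<and>
                       (\<forall>z\<in>ball 0 1. f z = hyp2F1_series al be c z))"

definition heunR :: "complex \<Rightarrow> complex \<Rightarrow> complex \<Rightarrow> nat \<Rightarrow> complex" where
  "heunR a ga ep n = (1 - a) * of_nat n * (ep + ga + of_nat n - 1)"

definition heunQ :: "complex \<Rightarrow> complex \<Rightarrow> complex \<Rightarrow> complex \<Rightarrow> complex \<Rightarrow> complex \<Rightarrow> complex \<Rightarrow> nat \<Rightarrow> complex" where
  "heunQ a al be ga de ep q n =
     - heunR a ga ep n + a * (1 + of_nat n - de) * (of_nat n + ep) + (a * al * be - q)"

definition heunP :: "complex \<Rightarrow> complex \<Rightarrow> complex \<Rightarrow> complex \<Rightarrow> complex \<Rightarrow> nat \<Rightarrow> complex" where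
  "heunP a al be ga ep n =
     - (a / (of_nat n + ep + ga)) * (of_nat n + ep) * (of_nat n + ep + ga - al)
       * (of_nat n + ep + ga - be)"

definition heunM :: "complex \<Rightarrow> complex \<Rightarrow> complex \<Rightarrow> complex \<Rightarrow> complex \<Rightarrow> complex \<Rightarrow> complex
                     \<Rightarrow> nat \<Rightarrow> nat \<Rightarrow> complex" where
  "heunM a al be ga de ep q i j =
     (if j = i then heunQ a al be ga de ep q i
      else if j = i + 1 then heunR a ga ep j
      else if i = j + 1 then heunP a al be ga ep j
      else 0)"

end

theory Submission
  imports Defs "HOL-Complex_Analysis.Complex_Analysis"
begin

text \<open>If the lower parameter of a Gauss series equals an upper one minus \<open>k\<close>, Euler's
  transformation makes it \<open>(1 - z)\<^sup>-\<^sup>\<beta>\<^sup>-\<^sup>k\<close> times a polynomial: for \<open>k = 0\<close> the series is the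
  binomial series of \<open>(1 - z)\<^sup>-\<^sup>\<beta>\<close>, and the operator \<open>1 + (z/c) d/dz\<close> lowers the lower
  parameter from \<open>c + 1\<close> to \<open>c\<close> while lowering the exponent of \<open>1 - z\<close> by one.
  Under \<open>\<epsilon> + \<gamma> - \<alpha> = -N\<close> every summand \<open>\<^sub>2F\<^sub>1(\<alpha>, \<beta>; \<gamma> + \<epsilon> + n; z)\<close> has lower parameter
  \<open>\<alpha> - (N - n)\<close>, and \<open>-\<beta> - (N - n) = (1 - \<delta>) + n\<close>, so the whole sum has the claimed form
  for arbitrary coefficients.\<close>

lemma slit_plane_eq: "slit_plane = - {z. Im z = 0 \<and> 1 \<le> Re z}"
  unfolding slit_plane_def by (auto simp: complex_eq_iff)

lemma open_slit_plane: "open slit_plane"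
  unfolding slit_plane_eq
  by (intro open_Compl closed_Collect_conj continuous_intros closed_Collect_eq closed_Collect_le)

lemma one_minus_notin_nonpos_Reals: "z \<in> slit_plane \<Longrightarrow> 1 - z \<notin> \<real>\<^sub>\<le>\<^sub>0"
  unfolding slit_plane_eq by (auto simp: complex_nonpos_Reals_iff)

lemma ball_subset_slit_plane: "ball 0 1 \<subseteq> slit_plane"
proof
  fix z :: complex assume "z \<in> ball 0 1"
  with abs_Re_le_cmod[of z] show "z \<in> slit_plane" unfolding slit_plane_eq by auto
qed

lemma starlike_slit_plane: "starlike slit_plane"
  unfolding starlike_def
proof (intro bexI ballI subsetI)
  show "0 \<in> slit_plane" unfolding slit_plane_eq by auto
  fix x y assume x: "x \<in> slit_plane" and "y \<in> closed_segment 0 x"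
  then obtain u :: real where u: "0 \<le> u" "u \<le> 1" "y = u *\<^sub>R x"
    by (auto simp: closed_segment_def)
  show "y \<in> slit_plane"
  proof (rule ccontr)
    assume "y \<notin> slit_plane"
    hence h: "u * Im x = 0" "1 \<le> u * Re x" using u unfolding slit_plane_eq by auto
    hence "u > 0" using u by (cases "u = 0") auto
    with h have "Im x = 0" by simp
    moreover have "Re x \<ge> 1"
    proof (rule ccontr)
      assume "\<not> Re x \<ge> 1"
      hence "u * Re x < 1" using u \<open>u > 0\<close>
        by (smt (verit) mult_le_cancel_left1 mult_left_le_one_le)
      thus False using h by simp
    qed
    ultimately show False using x unfolding slit_plane_eq by auto
  qed
qed

lemma hyp2F1_eq_on_slit_plane:
  assumes "f holomorphic_on slit_plane"
    and "\<And>z. z \<in> ball 0 1 \<Longrightarrow> f z = hyp2F1_series al be c z"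
    and "z \<in> slit_plane"
  shows "hyp2F1 al be c z = f z"
proof -
  have "\<exists>f. f holomorphic_on slit_plane \<and> (\<forall>z\<in>ball 0 1. f z = hyp2F1_series al be c z)"
    using assms(1,2) by blast
  from someI_ex[OF this] have
    "hyp2F1 al be c holomorphic_on slit_plane"
    "\<forall>z\<in>ball 0 1. hyp2F1 al be c z = hyp2F1_series al be c z"
    unfolding hyp2F1_def by blast+
  then show ?thesis
    using analytic_continuation_open[of "ball 0 1" slit_plane "hyp2F1 al be c" f z] assms
      open_slit_plane starlike_imp_connected[OF starlike_slit_plane] ball_subset_slit_plane
    by auto
qed

lemma hyp2F1_commute: "hyp2F1 al be c = hyp2F1 be al c"
proof -
  have "hyp2F1_series al be c = hyp2F1_series be al c"
    unfolding hyp2F1_series_def by (simp add: ac_simps)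
  thus ?thesis unfolding hyp2F1_def by simp
qed

definition hyp2F1_coeff :: "complex \<Rightarrow> complex \<Rightarrow> complex \<Rightarrow> nat \<Rightarrow> complex" where
  "hyp2F1_coeff al be c n = pochhammer al n * pochhammer be n / (pochhammer c n * fact n)"

lemma eval_fps_hyp2F1_coeff: "eval_fps (Abs_fps (hyp2F1_coeff al be c)) = hyp2F1_series al be c"
  unfolding eval_fps_def hyp2F1_series_def hyp2F1_coeff_def by simp

lemma hyp2F1_coeff_lower_eq_upper:
  assumes "\<forall>m::nat. al \<noteq> - of_nat m"
  shows "hyp2F1_coeff al be al n = (-1)^n * ((-be) gchoose n)"
proof -
  have "pochhammer al n \<noteq> 0" using assms by (auto simp: pochhammer_eq_0_iff)
  thus ?thesis
    by (simp add: hyp2F1_coeff_def gbinomial_pochhammer power_mult_distrib[symmetric])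
qed

lemma hyp2F1_coeff_lower_pred:
  assumes "\<forall>m::nat. c \<noteq> - of_nat m"
  shows "hyp2F1_coeff al be c n = (1 + of_nat n / c) * hyp2F1_coeff al be (c + 1) n"
proof -
  define d where "d = c + of_nat n"
  have "pochhammer c n * d \<noteq> 0"
    using assms by (auto simp: d_def pochhammer_Suc[symmetric] pochhammer_eq_0_iff)
  moreover have c: "c \<noteq> 0" using assms[rule_format, of 0] by simp
  moreover have "pochhammer (c + 1) n = pochhammer c n * d / c"
    using pochhammer_rec[of c n] pochhammer_Suc[of c n] c by (simp add: d_def field_simps)
  moreover have "1 + of_nat n / c = d / c"
    using c by (simp add: d_def field_simps)
  ultimately show ?thesis
    unfolding hyp2F1_coeff_def by (simp add: field_simps)
qed

lemma eval_fps_gbinomial_neg: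
  fixes be :: complex
  shows "fps_conv_radius (Abs_fps (\<lambda>n. (-1)^n * ((-be) gchoose n))) \<ge> 1"
    and "norm z < 1 \<Longrightarrow> eval_fps (Abs_fps (\<lambda>n. (-1)^n * ((-be) gchoose n))) z = (1 - z) powr (-be)"
proof -
  have "fps_conv_radius (Abs_fps (\<lambda>n. (-1)^n * ((-be) gchoose n)))
      = fps_conv_radius (fps_binomial (-be))"
    unfolding fps_conv_radius_def
    by (intro conv_radius_cong) (auto simp: norm_mult norm_power)
  then show "fps_conv_radius (Abs_fps (\<lambda>n. (-1)^n * ((-be) gchoose n))) \<ge> 1"
    by (simp add: fps_conv_radius_binomial)
  assume "norm z < 1"
  have "eval_fps (Abs_fps (\<lambda>n. (-1)^n * ((-be) gchoose n))) z = eval_fps (fps_binomial (-be)) (-z)"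
    unfolding eval_fps_def
    by (intro suminf_cong) (simp only: fps_nth_Abs_fps fps_binomial_nth power_minus[of z] mult_ac)
  also have "\<dots> = (1 - z) powr (-be)"
    using eval_fps_binomial[of "-z" "-be"] \<open>norm z < 1\<close> by simp
  finally show "eval_fps (Abs_fps (\<lambda>n. (-1)^n * ((-be) gchoose n))) z = (1 - z) powr (-be)" .
qed

lemma fps_conv_radius_Euler_operator:
  fixes F :: "complex fps"
  assumes "fps_conv_radius F \<ge> 1"
  shows "fps_conv_radius (fps_deriv F) \<ge> 1"
    and "fps_conv_radius (fps_X * fps_deriv F) \<ge> 1"
    and "fps_conv_radius (fps_const b * (fps_X * fps_deriv F)) \<ge> 1"
    and "fps_conv_radius (F + fps_const b * (fps_X * fps_deriv F)) \<ge> 1"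
proof -
  show D: "fps_conv_radius (fps_deriv F) \<ge> 1"
    using fps_conv_radius_deriv[of F] assms by order
  then show "fps_conv_radius (fps_X * fps_deriv F) \<ge> 1"
    using fps_conv_radius_mult[of fps_X "fps_deriv F"] by (simp add: min_def split: if_splits)
  then show bXD: "fps_conv_radius (fps_const b * (fps_X * fps_deriv F)) \<ge> 1"
    using fps_conv_radius_mult[of "fps_const b" "fps_X * fps_deriv F"]
    by (simp add: min_def split: if_splits)
  then show "fps_conv_radius (F + fps_const b * (fps_X * fps_deriv F)) \<ge> 1"
    using fps_conv_radius_add[of F "fps_const b * (fps_X * fps_deriv F)"] assms
    by (simp add: min_def split: if_splits)
qed

lemma eval_fps_Euler_operator:
  fixes F :: "complex fps"
  assumes "fps_conv_radius F \<ge> 1" and "norm z < 1"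
  shows "eval_fps (F + fps_const b * (fps_X * fps_deriv F)) z
           = eval_fps F z + b * (z * eval_fps (fps_deriv F) z)"
proof -
  have "ereal (norm z) < 1" using assms(2) by simp
  moreover note fps_conv_radius_Euler_operator(1,2)[OF assms(1)]
    fps_conv_radius_Euler_operator(3)[OF assms(1), of b]
  ultimately have
    "ereal (norm z) < fps_conv_radius F" "ereal (norm z) < fps_conv_radius (fps_deriv F)"
    "ereal (norm z) < fps_conv_radius (fps_X * fps_deriv F)"
    "ereal (norm z) < fps_conv_radius (fps_const b * (fps_X * fps_deriv F))"
    using assms(1) by order+
  then show ?thesis
    by (simp add: eval_fps_add eval_fps_mult)
qed

lemma has_field_derivative_one_minus_powr:
  fixes z s :: complex
  assumes "1 - z \<notin> \<real>\<^sub>\<le>\<^sub>0"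
  shows "((\<lambda>z. (1 - z) powr s) has_field_derivative - (s * (1 - z) powr (s - 1))) (at z)"
proof -
  have "((\<lambda>z. 1 - z) has_field_derivative -1) (at z)"
    by (auto intro!: derivative_eq_intros)
  from DERIV_chain2[OF has_field_derivative_powr[OF assms] this] show ?thesis by simp
qed

lemma eval_fps_Euler_operator_powr_poly:
  fixes F :: "complex fps"
  assumes radius: "fps_conv_radius F \<ge> 1"
    and F: "\<forall>z\<in>ball 0 1. eval_fps F z = (1 - z) powr s * poly p z"
  shows "\<exists>q. \<forall>z\<in>ball 0 1.
           eval_fps (F + fps_const b * (fps_X * fps_deriv F)) z = (1 - z) powr (s - 1) * poly q z"
proof (intro exI ballI)
  fix z :: complex assume z: "z \<in> ball 0 1"
  have z1: "1 - z \<notin> \<real>\<^sub>\<le>\<^sub>0"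
    using one_minus_notin_nonpos_Reals ball_subset_slit_plane z by blast
  define H where "H = (\<lambda>z. (1 - z) powr s * poly p z)"
  have dH: "(H has_field_derivative - (s * (1 - z) powr (s - 1)) * poly p z
               + (1 - z) powr s * poly (pderiv p) z) (at z)"
    unfolding H_def
    using DERIV_mult[OF has_field_derivative_one_minus_powr[OF z1, of s] poly_DERIV[of p z]]
    by (simp add: ac_simps)
  have "ereal (norm z) < 1" using z by simp
  then have "(eval_fps F has_field_derivative eval_fps (fps_deriv F) z) (at z)"
    by (intro has_field_derivative_eval_fps) (use radius in order)
  then have "(H has_field_derivative eval_fps (fps_deriv F) z) (at z)"
    by (rule has_field_derivative_transform_within_open[OF _ _ z]) (use F in \<open>auto simp: H_def\<close>)
  then have F': "eval_fps (fps_deriv F) z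
      = - (s * (1 - z) powr (s - 1)) * poly p z + (1 - z) powr s * poly (pderiv p) z"
    using DERIV_unique dH by blast
  have pw: "(1 - z) powr s = (1 - z) powr (s - 1) * (1 - z)"
    using powr_add[of "1 - z" "s - 1" 1] z1 by auto
  have "eval_fps (F + fps_const b * (fps_X * fps_deriv F)) z
      = eval_fps F z + b * (z * eval_fps (fps_deriv F) z)"
    using z by (intro eval_fps_Euler_operator[OF radius]) simp
  also have "\<dots> = (1 - z) powr (s - 1) * poly ([:1, -1:] * p
      + smult b ([:0, 1:] * (smult (- s) p + [:1, -1:] * pderiv p))) z"
    unfolding F' F[rule_format, OF z] pw by (simp add: algebra_simps)
  finally show "eval_fps (F + fps_const b * (fps_X * fps_deriv F)) z = (1 - z) powr (s - 1) * poly
      ([:1, -1:] * p + smult b ([:0, 1:] * (smult (- s) p + [:1, -1:] * pderiv p))) z" .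
qed

lemma Abs_fps_hyp2F1_coeff_lower_pred:
  assumes "\<forall>m::nat. c \<noteq> - of_nat m"
  shows "Abs_fps (hyp2F1_coeff al be c) = Abs_fps (hyp2F1_coeff al be (c + 1))
           + fps_const (1 / c) * (fps_X * fps_deriv (Abs_fps (hyp2F1_coeff al be (c + 1))))"
proof (rule fps_ext)
  fix n
  show "Abs_fps (hyp2F1_coeff al be c) $ n = (Abs_fps (hyp2F1_coeff al be (c + 1))
           + fps_const (1 / c) * (fps_X * fps_deriv (Abs_fps (hyp2F1_coeff al be (c + 1))))) $ n"
    using hyp2F1_coeff_lower_pred[OF assms, of al be n]
    by (cases n) (simp_all add: algebra_simps add_divide_distrib)
qed

lemma hyp2F1_series_lower_sub_nat:
  fixes al be :: complex
  assumes "\<forall>m::nat. al - of_nat k \<noteq> - of_nat m"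
  shows "fps_conv_radius (Abs_fps (hyp2F1_coeff al be (al - of_nat k))) \<ge> 1 \<and>
    (\<exists>p. \<forall>z\<in>ball 0 1. hyp2F1_series al be (al - of_nat k) z = (1 - z) powr (-be - of_nat k) * poly p z)"
  using assms
proof (induction k)
  case 0
  then have coeff: "Abs_fps (hyp2F1_coeff al be al) = Abs_fps (\<lambda>n. (-1)^n * ((-be) gchoose n))"
    using hyp2F1_coeff_lower_eq_upper[of al be] by (intro arg_cong[where f = Abs_fps] ext) simp
  have "\<forall>z\<in>ball 0 1. hyp2F1_series al be (al - of_nat 0) z = (1 - z) powr (-be - of_nat 0) * poly 1 z"
    using eval_fps_gbinomial_neg(2)[of _ be] by (simp add: eval_fps_hyp2F1_coeff[symmetric] coeff)
  with coeff eval_fps_gbinomial_neg(1)[of be] show ?case by (simp only: of_nat_0 diff_zero) metis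
next
  case (Suc k)
  define c where "c = al - of_nat (Suc k)"
  have c1: "al - of_nat k = c + 1" by (simp add: c_def)
  have c: "\<forall>m::nat. c \<noteq> - of_nat m"
    using Suc.prems by (simp add: c_def)
  have "\<forall>m::nat. al - of_nat k \<noteq> - of_nat m"
  proof
    fix m :: nat
    show "al - of_nat k \<noteq> - of_nat m"
      using c[rule_format, of "Suc m"] unfolding c1 by (auto simp: algebra_simps eq_neg_iff_add_eq_0)
  qed
  from Suc.IH[OF this] obtain p where
    radius: "fps_conv_radius (Abs_fps (hyp2F1_coeff al be (c + 1))) \<ge> 1" and
    F: "\<forall>z\<in>ball 0 1. eval_fps (Abs_fps (hyp2F1_coeff al be (c + 1))) z
          = (1 - z) powr (-be - of_nat k) * poly p z"
    unfolding c1 eval_fps_hyp2F1_coeff by blast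
  have G: "Abs_fps (hyp2F1_coeff al be c) = Abs_fps (hyp2F1_coeff al be (c + 1))
           + fps_const (1 / c) * (fps_X * fps_deriv (Abs_fps (hyp2F1_coeff al be (c + 1))))"
    by (rule Abs_fps_hyp2F1_coeff_lower_pred[OF c])
  have exponent: "-be - of_nat (Suc k) = (-be - of_nat k) - 1" by simp
  show ?case
    unfolding c_def[symmetric] eval_fps_hyp2F1_coeff[symmetric] G exponent
    using fps_conv_radius_Euler_operator(4)[OF radius] eval_fps_Euler_operator_powr_poly[OF radius F]
    by simp
qed

lemma hyp2F1_lower_sub_nat:
  fixes al be :: complex
  assumes "\<forall>m::nat. al - of_nat k \<noteq> - of_nat m"
  shows "\<exists>p. \<forall>z\<in>slit_plane. hyp2F1 al be (al - of_nat k) z = (1 - z) powr (-be - of_nat k) * poly p z"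
proof -
  obtain p where p: "\<forall>z\<in>ball 0 1.
      hyp2F1_series al be (al - of_nat k) z = (1 - z) powr (-be - of_nat k) * poly p z"
    using hyp2F1_series_lower_sub_nat[OF assms] by blast
  have "(\<lambda>z. (1 - z) powr (-be - of_nat k) * poly p z) holomorphic_on slit_plane"
    using one_minus_notin_nonpos_Reals by (intro holomorphic_intros) auto
  with p show ?thesis
    by (intro exI ballI hyp2F1_eq_on_slit_plane) auto
qed

lemma sum_hyp2F1_lower_shift:
  fixes al be c0 :: complex and c :: "nat \<Rightarrow> complex"
  assumes "\<forall>m::nat. c0 \<noteq> - of_nat m" and "c0 = al - of_nat N"
  shows "\<exists>p. \<forall>z\<in>slit_plane.
           (\<Sum>n\<le>N. c n * hyp2F1 al be (c0 + of_nat n) z) = (1 - z) powr (-be - of_nat N) * poly p z"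
proof -
  have lower: "c0 + of_nat n = al - of_nat (N - n)" if "n \<le> N" for n
    using assms(2) that by (simp add: of_nat_diff)
  have "\<exists>p. \<forall>z\<in>slit_plane. hyp2F1 al be (c0 + of_nat n) z
          = (1 - z) powr (-be - of_nat (N - n)) * poly p z" if "n \<le> N" for n
  proof (unfold lower[OF that], rule hyp2F1_lower_sub_nat, rule allI)
    fix m :: nat
    show "al - of_nat (N - n) \<noteq> - of_nat m"
      using assms(1)[rule_format, of "m + n"] lower[OF that] by (auto simp: algebra_simps)
  qed
  then obtain P where P: "\<And>n z. n \<le> N \<Longrightarrow> z \<in> slit_plane \<Longrightarrow>
      hyp2F1 al be (c0 + of_nat n) z = (1 - z) powr (-be - of_nat (N - n)) * poly (P n) z"
    by metis
  show ?thesis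
  proof (intro exI ballI)
    fix z assume z: "z \<in> slit_plane"
    have "1 - z \<noteq> 0" using one_minus_notin_nonpos_Reals[OF z] by auto
    have "(1 - z) powr (-be - of_nat (N - n)) = (1 - z) powr (-be - of_nat N) * (1 - z) ^ n"
      if "n \<le> N" for n
    proof -
      have exponent: "-be - of_nat (N - n) = (-be - of_nat N) + of_nat n"
        using that by (simp add: of_nat_diff)
      show ?thesis
        unfolding exponent powr_add using powr_nat'[of "1 - z" n] \<open>1 - z \<noteq> 0\<close> by simp
    qed
    then show "(\<Sum>n\<le>N. c n * hyp2F1 al be (c0 + of_nat n) z)
        = (1 - z) powr (-be - of_nat N) * poly (\<Sum>n\<le>N. smult (c n) ([:1, -1:] ^ n * P n)) z"
      unfolding poly_sum sum_distrib_left using P[OF _ z]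
      by (intro sum.cong) (auto simp: poly_power)
  qed
qed

theorem mainTheorem3:
  fixes a al be ga de ep q :: complex and N :: nat and c :: "nat \<Rightarrow> complex"
  assumes "a \<noteq> 0" and "a \<noteq> 1"
    and "1 + al + be = ga + de + ep"
    and "al * be \<noteq> 0"
    and "ga + ep \<notin> {- of_nat m | m. m \<in> (UNIV :: nat set)}"
    and "ep + ga - al = - of_nat N \<or> ep + ga - be = - of_nat N"
    and "c 0 = 1"
    and "\<forall>i\<le>N. (\<Sum>j\<le>N. heunM a al be ga de ep q i j * c j) = 0"
  shows "\<exists>p :: complex poly. \<forall>z\<in>slit_plane.
           (\<Sum>n\<le>N. c n * hyp2F1 al be (ga + ep + of_nat n) z)
             = (1 - z) powr (1 - de) * poly p z"
proof -
  have lower: "\<forall>m::nat. ga + ep \<noteq> - of_nat m"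
    using assms(5) by blast
  from assms(6) show ?thesis
  proof
    assume h: "ep + ga - al = - of_nat N"
    then have "ga + ep = al - of_nat N" by (simp add: algebra_simps)
    moreover have "1 - de = -be - of_nat N" using h assms(3) by (simp add: complex_eq_iff)
    ultimately show ?thesis
      using sum_hyp2F1_lower_shift[OF lower, where al = al and be = be and c = c] by simp
  next
    assume h: "ep + ga - be = - of_nat N"
    then have "ga + ep = be - of_nat N" by (simp add: algebra_simps)
    moreover have "1 - de = -al - of_nat N" using h assms(3) by (simp add: complex_eq_iff)
    ultimately show ?thesis
      using sum_hyp2F1_lower_shift[OF lower, where al = be and be = al and c = c]
      by (simp add: hyp2F1_commute)
  qed
qed

end
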